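(* For every $j\in\{1,\dots,N\}$ with $S_j\neq\emptyset$ (i.e. $S_j=(U_j^*,c_j^* )$), we have $\sum_{(U,c)\in S^*_{j-1}}p_1^{(j)}(U,c)\ge p_2^{(j-1)}(U_j^*,c_j^* )$.
   Context: Setup as for problem (P1): users $\{1,\dots,K\}$ partitioned into groups $\mathcal G_1,\dots,\mathcal G_L$; $N$ RBs; chunks are vectors $c\in\{0,1\}^N$ whose ones form a nonempty contiguous block, ${\rm Tail}(c)$ the last index of $c$, chunks intersect if they share an index; $\mathcal U$ = nonempty $U\subseteq\{1,\dots,K\}$ with $|U|\le T$, $|U\cap\mathcal G_s|\le1\ \forall s$; pairs are elements of $\mathcal U\times\mathcal C$. Metrics $p\ge0$; weights $\beta^q\in[0,1]$ ($q=1,\dots,J$); binary weights $\alpha^q\in\{0,1\}$ ($q\in\mathcal I$). A set $F$ of pairs is feasible if each group meets $U$ for at most one element of $F$, each RB lies in $c$ for at most one element, $\sum_F\beta^q\le1$ ($q\le J$) and $\sum_F\alpha^q\le1$ ($q\in\mathcal I$). Pairs $(U,c),(U',c')$ conflict if some group meets both $U,U'$, or $c,c'$ intersect, or some $q\in\mathcal I$ has $\alpha^q(U,c)=\alpha^q(U',c')=1$. $\mathcal M^{\rm narrow}$ = pairs with $\beta^q\le1/2$ for all $q\le J$; $\max_q\beta^q:=0$ if $J=0$; $(x)^+=\max\{x,0\}$. Recursion: $p_2^{(0)}=p$ on $\mathcal M^{\rm narrow}$. For $j=1,\dots,N$: let $(U_j^*,c_j^* )$ maximize $p_2^{(j-1)}$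 over pairs of $\mathcal M^{\rm narrow}$ with ${\rm Tail}(c)=j$; set $S_j=(U_j^*,c_j^* )$ if $p_2^{(j-1)}(U_j^*,c_j^* )>0$ and $S_j=\emptyset$ otherwise. Define, for $(U,c)\in\mathcal M^{\rm narrow}$, $p_1^{(j)}(U,c)=(p_2^{(j-1)}(U_j^*,c_j^* ))^+\mathbf 1[p_2^{(j-1)}(U,c)>0]$ if $(U,c)$ conflicts with $(U_j^*,c_j^* )$, and $p_1^{(j)}(U,c)=2(p_2^{(j-1)}(U_j^*,c_j^* ))^+\mathbf 1[p_2^{(j-1)}(U,c)>0]\max_{q\le J}\beta^q(U,c)$ otherwise; and $p_2^{(j)}=p_2^{(j-1)}-p_1^{(j)}$. Stacks: $S_N^*=\emptyset$ and for $j=N,\dots,1$, $S_{j-1}^*=S_j^*\cup\{S_j\}$ if $S_j\neq\emptyset$ and $S_j^*\cup\{S_j\}$ is feasible, else $S_{j-1}^*=S_j^*$. *)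

theory Defs
  imports Complex_Main
begin

text \<open>A pair is (U, c): U a set of users, c a chunk, represented by the set of
  RB indices where the 0/1 vector c equals one.\<close>
type_synonym pair = "nat set \<times> nat set"

definition chunks :: "nat \<Rightarrow> nat set set" where
  "chunks N = {{a..b} | a b. 1 \<le> a \<and> a \<le> b \<and> b \<le> N}"

definition Tail :: "nat set \<Rightarrow> nat" where
  "Tail c = Max c"

definition Uset :: "nat \<Rightarrow> nat \<Rightarrow> (nat \<Rightarrow> nat set) \<Rightarrow> nat \<Rightarrow> nat set set" where
  "Uset K L G T = {U. U \<noteq> {} \<and> U \<subseteq> {1..K} \<and> card U \<le> T \<and> (\<forall>s\<in>{1..L}. card (U \<inter> G s) \<le> 1)}"

definition pairs :: "nat \<Rightarrow> nat \<Rightarrow> (nat \<Rightarrow> nat set) \<Rightarrow> nat \<Rightarrow> nat \<Rightarrow> pair set" where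
  "pairs K L G T N = Uset K L G T \<times> chunks N"

definition narrow :: "nat \<Rightarrow> nat \<Rightarrow> (nat \<Rightarrow> nat set) \<Rightarrow> nat \<Rightarrow> nat \<Rightarrow> nat \<Rightarrow> (nat \<Rightarrow> pair \<Rightarrow> real) \<Rightarrow> pair set" where
  "narrow K L G T N J \<beta> = {x \<in> pairs K L G T N. \<forall>q\<in>{1..J}. \<beta> q x \<le> 1/2}"

definition maxbeta :: "nat \<Rightarrow> (nat \<Rightarrow> pair \<Rightarrow> real) \<Rightarrow> pair \<Rightarrow> real" where
  "maxbeta J \<beta> x = (if J = 0 then 0 else Max ((\<lambda>q. \<beta> q x) ` {1..J}))"

definition conflict :: "nat \<Rightarrow> (nat \<Rightarrow> nat set) \<Rightarrow> nat set \<Rightarrow> (nat \<Rightarrow> pair \<Rightarrow> real) \<Rightarrow> pair \<Rightarrow> pair \<Rightarrow> bool" where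
  "conflict L G I \<alpha> x y \<longleftrightarrow>
     (\<exists>s\<in>{1..L}. G s \<inter> fst x \<noteq> {} \<and> G s \<inter> fst y \<noteq> {})
     \<or> snd x \<inter> snd y \<noteq> {}
     \<or> (\<exists>q\<in>I. \<alpha> q x = 1 \<and> \<alpha> q y = 1)"

definition feasible :: "nat \<Rightarrow> (nat \<Rightarrow> nat set) \<Rightarrow> nat \<Rightarrow> nat \<Rightarrow> (nat \<Rightarrow> pair \<Rightarrow> real)
    \<Rightarrow> nat set \<Rightarrow> (nat \<Rightarrow> pair \<Rightarrow> real) \<Rightarrow> pair set \<Rightarrow> bool" where
  "feasible L G N J \<beta> I \<alpha> F \<longleftrightarrow>
     (\<forall>s\<in>{1..L}. card {x\<in>F. G s \<inter> fst x \<noteq> {}} \<le> 1)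
     \<and> (\<forall>r\<in>{1..N}. card {x\<in>F. r \<in> snd x} \<le> 1)
     \<and> (\<forall>q\<in>{1..J}. (\<Sum>x\<in>F. \<beta> q x) \<le> 1)
     \<and> (\<forall>q\<in>I. (\<Sum>x\<in>F. \<alpha> q x) \<le> 1)"

text \<open>The recursion. sel j is the chosen maximizer (U_j^*, c_j^*).
  p2 ... sel j = p_2^{(j)}.\<close>
primrec p2 :: "nat \<Rightarrow> (nat \<Rightarrow> nat set) \<Rightarrow> nat set \<Rightarrow> (nat \<Rightarrow> pair \<Rightarrow> real) \<Rightarrow> nat
    \<Rightarrow> (nat \<Rightarrow> pair \<Rightarrow> real) \<Rightarrow> (pair \<Rightarrow> real) \<Rightarrow> (nat \<Rightarrow> pair) \<Rightarrow> nat \<Rightarrow> pair \<Rightarrow> real" where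
  "p2 L G I \<alpha> J \<beta> p sel 0 x = p x"
| "p2 L G I \<alpha> J \<beta> p sel (Suc j) x =
     p2 L G I \<alpha> J \<beta> p sel j x -
     (let m = max (p2 L G I \<alpha> J \<beta> p sel j (sel (Suc j))) 0 in
      if p2 L G I \<alpha> J \<beta> p sel j x > 0 then
        (if conflict L G I \<alpha> x (sel (Suc j)) then m else 2 * m * maxbeta J \<beta> x)
      else 0)"

text \<open>p1 ... sel j = p_1^{(j)} for j \<ge> 1.\<close>
definition p1 :: "nat \<Rightarrow> (nat \<Rightarrow> nat set) \<Rightarrow> nat set \<Rightarrow> (nat \<Rightarrow> pair \<Rightarrow> real) \<Rightarrow> nat
    \<Rightarrow> (nat \<Rightarrow> pair \<Rightarrow> real) \<Rightarrow> (pair \<Rightarrow> real) \<Rightarrow> (nat \<Rightarrow> pair) \<Rightarrow> nat \<Rightarrow> pair \<Rightarrow> real" where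
  "p1 L G I \<alpha> J \<beta> p sel j x =
     (let m = max (p2 L G I \<alpha> J \<beta> p sel (j - 1) (sel j)) 0 in
      if p2 L G I \<alpha> J \<beta> p sel (j - 1) x > 0 then
        (if conflict L G I \<alpha> x (sel j) then m else 2 * m * maxbeta J \<beta> x)
      else 0)"

text \<open>Stacks: stk k = S^*_{N-k}; S^*_N = {} and
  S^*_{j-1} = S^*_j \<union> {S_j} if S_j \<noteq> \<emptyset> and this is feasible.\<close>
primrec stk :: "nat \<Rightarrow> (nat \<Rightarrow> nat set) \<Rightarrow> nat set \<Rightarrow> (nat \<Rightarrow> pair \<Rightarrow> real) \<Rightarrow> nat
    \<Rightarrow> (nat \<Rightarrow> pair \<Rightarrow> real) \<Rightarrow> (pair \<Rightarrow> real) \<Rightarrow> (nat \<Rightarrow> pair) \<Rightarrow> nat \<Rightarrow> nat \<Rightarrow> pair set" where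
  "stk L G I \<alpha> J \<beta> p sel N 0 = {}"
| "stk L G I \<alpha> J \<beta> p sel N (Suc k) =
     (let j = N - k; Sj = sel j; F = stk L G I \<alpha> J \<beta> p sel N k in
      if p2 L G I \<alpha> J \<beta> p sel (j - 1) Sj > 0 \<and> feasible L G N J \<beta> I \<alpha> (insert Sj F)
      then insert Sj F else F)"

definition Sstar :: "nat \<Rightarrow> (nat \<Rightarrow> nat set) \<Rightarrow> nat set \<Rightarrow> (nat \<Rightarrow> pair \<Rightarrow> real) \<Rightarrow> nat
    \<Rightarrow> (nat \<Rightarrow> pair \<Rightarrow> real) \<Rightarrow> (pair \<Rightarrow> real) \<Rightarrow> (nat \<Rightarrow> pair) \<Rightarrow> nat \<Rightarrow> nat \<Rightarrow> pair set" where
  "Sstar L G I \<alpha> J \<beta> p sel N i = stk L G I \<alpha> J \<beta> p sel N (N - i)"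

end

theory Submission
  imports Defs
begin

text \<open>
  Put v = p_2^{(j-1)}(S_j) > 0 and F = S^*_j.  Every element y of F is some
  S_i with i > j that was still positive at step i-1; since p_2 only decreases along the
  recursion, p_2^{(j-1)}(y) > 0, so p_1^{(j)}(y) is v when y conflicts with S_j and
  2 v maxbeta(y) otherwise; in particular p_1^{(j)} is nonnegative on F.  Three cases:
  (1) S_j is pushed: S_j conflicts with itself, so it alone contributes v;
  (2) S_j is rejected and some y in F conflicts with S_j: y alone contributes v;
  (3) S_j is rejected and conflicts with nothing in F: then the group, RB and binary
      constraints survive the insertion, so some beta^q constraint fails; as S_j is narrow,
      F carries beta^q-weight above 1/2, and the terms 2 v beta^q(y) sum to more than v.
\<close>

lemma maxbeta_ge:
  assumes "q \<in> {1..J}"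
  shows "\<beta> q x \<le> maxbeta J \<beta> x"
  using assms by (auto simp: maxbeta_def intro!: Max_ge)

lemma maxbeta_nonneg:
  assumes "\<forall>q\<in>{1..J}. 0 \<le> \<beta> q x"
  shows "0 \<le> maxbeta J \<beta> x"
proof (cases "J = 0")
  case True
  then show ?thesis by (simp add: maxbeta_def)
next
  case False
  then have "1 \<in> {1..J}" by auto
  then show ?thesis using maxbeta_ge[of 1 J \<beta> x] assms by force
qed

text \<open>Each step of the recursion subtracts a nonnegative amount, so p_2 decreases in j.\<close>

lemma p2_antimono:
  assumes "\<forall>q\<in>{1..J}. 0 \<le> \<beta> q x" and "k \<le> k'"
  shows "p2 L G I \<alpha> J \<beta> p sel k' x \<le> p2 L G I \<alpha> J \<beta> p sel k x"
proof -
  have one_step: "p2 L G I \<alpha> J \<beta> p sel (Suc i) x \<le> p2 L G I \<alpha> J \<beta> p sel i x" for i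
    using maxbeta_nonneg[of J \<beta> x] assms(1) by (auto simp: Let_def)
  show ?thesis
    using assms(2)
  proof (induction k' rule: dec_induct)
    case base
    then show ?case by simp
  next
    case (step i)
    then show ?case using one_step[of i] by linarith
  qed
qed

lemma p1_nonneg:
  assumes "\<forall>q\<in>{1..J}. 0 \<le> \<beta> q x"
  shows "0 \<le> p1 L G I \<alpha> J \<beta> p sel j x"
  using maxbeta_nonneg[of J \<beta> x] assms by (auto simp: p1_def Let_def)

lemma p1_conflicting:
  assumes "p2 L G I \<alpha> J \<beta> p sel (j - 1) x > 0" and "conflict L G I \<alpha> x (sel j)"
  shows "p1 L G I \<alpha> J \<beta> p sel j x = max (p2 L G I \<alpha> J \<beta> p sel (j - 1) (sel j)) 0"
  using assms by (simp add: p1_def Let_def)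

lemma p1_nonconflicting_ge:
  assumes "p2 L G I \<alpha> J \<beta> p sel (j - 1) x > 0" and "\<not> conflict L G I \<alpha> x (sel j)"
    and "q \<in> {1..J}"
  shows "2 * max (p2 L G I \<alpha> J \<beta> p sel (j - 1) (sel j)) 0 * \<beta> q x \<le> p1 L G I \<alpha> J \<beta> p sel j x"
  using assms maxbeta_ge[OF assms(3), of \<beta> x] by (simp add: p1_def Let_def mult_left_mono)

text \<open>A pair conflicts with itself: its user set is nonempty and covered by the groups.\<close>

lemma conflict_self:
  assumes "(\<Union>s\<in>{1..L}. G s) = {1..K}" and "x \<in> pairs K L G T N"
  shows "conflict L G I \<alpha> x x"
proof -
  from assms(2) have "fst x \<noteq> {}" "fst x \<subseteq> {1..K}"
    by (auto simp: pairs_def Uset_def mem_Times_iff)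
  then obtain u where "u \<in> fst x" "u \<in> {1..K}" by blast
  with assms(1) obtain s where "s \<in> {1..L}" "u \<in> G s" by blast
  with \<open>u \<in> fst x\<close> show ?thesis unfolding conflict_def by blast
qed

lemma card_filter_insert_le_one:
  assumes "card {y \<in> F. P y} \<le> 1" and "P x \<Longrightarrow> \<forall>y\<in>F. \<not> P y"
  shows "card {y \<in> insert x F. P y} \<le> 1"
proof (cases "P x")
  case True
  then have "{y \<in> insert x F. P y} = {x}" using assms(2) by auto
  then show ?thesis by simp
next
  case False
  then have "{y \<in> insert x F. P y} = {y \<in> F. P y}" by auto
  then show ?thesis using assms(1) by simp
qed

lemma feasible_insert_nonconflicting:
  assumes feas: "feasible L G N J \<beta> I \<alpha> F" and fin: "finite F" and new: "x \<notin> F"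
    and nc: "\<forall>y\<in>F. \<not> conflict L G I \<alpha> y x"
    and binary: "\<forall>q\<in>I. \<forall>y\<in>insert x F. \<alpha> q y \<in> {0, 1}"
    and beta_ok: "\<forall>q\<in>{1..J}. (\<Sum>y\<in>insert x F. \<beta> q y) \<le> 1"
  shows "feasible L G N J \<beta> I \<alpha> (insert x F)"
proof -
  have groups: "card {y \<in> insert x F. G s \<inter> fst y \<noteq> {}} \<le> 1" if "s \<in> {1..L}" for s
  proof (rule card_filter_insert_le_one)
    show "card {y \<in> F. G s \<inter> fst y \<noteq> {}} \<le> 1" using feas that by (simp add: feasible_def)
    show "G s \<inter> fst x \<noteq> {} \<Longrightarrow> \<forall>y\<in>F. \<not> G s \<inter> fst y \<noteq> {}"
      using nc that unfolding conflict_def by blast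
  qed
  have rbs: "card {y \<in> insert x F. r \<in> snd y} \<le> 1" if "r \<in> {1..N}" for r
  proof (rule card_filter_insert_le_one)
    show "card {y \<in> F. r \<in> snd y} \<le> 1" using feas that by (simp add: feasible_def)
    show "r \<in> snd x \<Longrightarrow> \<forall>y\<in>F. r \<notin> snd y" using nc unfolding conflict_def by blast
  qed
  have alphas: "(\<Sum>y\<in>insert x F. \<alpha> q y) \<le> 1" if q: "q \<in> I" for q
  proof (cases "\<alpha> q x = 1")
    case True
    then have "\<alpha> q y = 0" if "y \<in> F" for y
      using binary nc q that unfolding conflict_def by fastforce
    then show ?thesis using fin new True by simp
  next
    case False
    then have "\<alpha> q x = 0" using binary q by blast
    then show ?thesis using fin new feas q by (simp add: feasible_def)
  qed
  show ?thesis unfolding feasible_def using groups rbs alphas beta_ok by blast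
qed

lemma infeasible_insert_heavy:
  assumes feas: "feasible L G N J \<beta> I \<alpha> F" and fin: "finite F"
    and infeas: "\<not> feasible L G N J \<beta> I \<alpha> (insert x F)"
    and nc: "\<forall>y\<in>F. \<not> conflict L G I \<alpha> y x"
    and binary: "\<forall>q\<in>I. \<forall>y\<in>insert x F. \<alpha> q y \<in> {0, 1}"
    and narrow: "\<forall>q\<in>{1..J}. \<beta> q x \<le> 1/2"
  obtains q where "q \<in> {1..J}" and "(\<Sum>y\<in>F. \<beta> q y) > 1/2"
proof -
  have new: "x \<notin> F" using feas infeas by (auto simp: insert_absorb)
  obtain q where q: "q \<in> {1..J}" and over: "(\<Sum>y\<in>insert x F. \<beta> q y) > 1"
    using infeas feasible_insert_nonconflicting[OF feas fin new nc binary] by force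
  have "(\<Sum>y\<in>insert x F. \<beta> q y) = \<beta> q x + (\<Sum>y\<in>F. \<beta> q y)" using fin new by simp
  with over narrow q have "(\<Sum>y\<in>F. \<beta> q y) > 1/2" by fastforce
  with q show ?thesis using that by blast
qed

lemma stk_finite: "finite (stk L G I \<alpha> J \<beta> p sel N k)"
  by (induction k) (auto simp: Let_def)

lemma stk_feasible: "feasible L G N J \<beta> I \<alpha> (stk L G I \<alpha> J \<beta> p sel N k)"
  by (induction k) (auto simp: feasible_def Let_def)

lemma stk_elements:
  assumes "k \<le> N" and "y \<in> stk L G I \<alpha> J \<beta> p sel N k"
  shows "\<exists>i. N - k < i \<and> i \<le> N \<and> y = sel i \<and> p2 L G I \<alpha> J \<beta> p sel (i - 1) (sel i) > 0"
  using assms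
proof (induction k)
  case 0
  then show ?case by simp
next
  case (Suc k)
  show ?case
  proof (cases "y \<in> stk L G I \<alpha> J \<beta> p sel N k")
    case True
    with Suc obtain i where "N - k < i" "i \<le> N" "y = sel i"
        "p2 L G I \<alpha> J \<beta> p sel (i - 1) (sel i) > 0"
      by auto
    then show ?thesis by (intro exI[of _ i]) auto
  next
    case False
    with Suc.prems show ?thesis
      by (intro exI[of _ "N - k"]) (auto simp: Let_def split: if_splits)
  qed
qed

lemma Sstar_step:
  assumes "1 \<le> j" and "j \<le> N"
  shows "Sstar L G I \<alpha> J \<beta> p sel N (j - 1) =
    (let F = Sstar L G I \<alpha> J \<beta> p sel N j in
     if p2 L G I \<alpha> J \<beta> p sel (j - 1) (sel j) > 0 \<and> feasible L G N J \<beta> I \<alpha> (insert (sel j) F)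
     then insert (sel j) F else F)"
proof -
  have "N - (j - 1) = Suc (N - j)" and "N - (N - j) = j" using assms by auto
  then show ?thesis by (simp add: Sstar_def Let_def)
qed

lemma Sstar_positive:
  assumes sel_pairs: "\<forall>i\<in>{1..N}. sel i \<in> pairs K L G T N"
    and beta_nonneg: "\<forall>q\<in>{1..J}. \<forall>x\<in>pairs K L G T N. 0 \<le> \<beta> q x"
    and "1 \<le> j" and "j \<le> N" and "y \<in> Sstar L G I \<alpha> J \<beta> p sel N j"
  shows "y \<in> pairs K L G T N \<and> p2 L G I \<alpha> J \<beta> p sel (j - 1) y > 0"
proof -
  have "\<exists>i. j < i \<and> i \<le> N \<and> y = sel i \<and> p2 L G I \<alpha> J \<beta> p sel (i - 1) (sel i) > 0"
    using stk_elements[of "N - j" N y L G I \<alpha> J \<beta> p sel] assms(4,5) by (simp add: Sstar_def)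
  then obtain i where i: "j < i" "i \<le> N" "y = sel i" "p2 L G I \<alpha> J \<beta> p sel (i - 1) (sel i) > 0"
    by blast
  then have y: "y \<in> pairs K L G T N" using sel_pairs assms(3) by auto
  have "p2 L G I \<alpha> J \<beta> p sel (i - 1) y \<le> p2 L G I \<alpha> J \<beta> p sel (j - 1) y"
    using beta_nonneg y i by (intro p2_antimono) auto
  with i y show ?thesis by auto
qed

lemma charge_ge_half_weight:
  fixes f w :: "'a \<Rightarrow> real"
  assumes "0 \<le> v" and "\<forall>y\<in>F. 2 * v * w y \<le> f y" and "(\<Sum>y\<in>F. w y) > 1/2"
  shows "v \<le> (\<Sum>y\<in>F. f y)"
proof -
  have "v * 1 \<le> v * (2 * (\<Sum>y\<in>F. w y))" using assms(1,3) by (intro mult_left_mono) auto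
  then have "v \<le> 2 * v * (\<Sum>y\<in>F. w y)" by simp
  also have "\<dots> = (\<Sum>y\<in>F. 2 * v * w y)" by (simp add: sum_distrib_left)
  also have "\<dots> \<le> (\<Sum>y\<in>F. f y)" using assms(2) by (intro sum_mono) auto
  finally show ?thesis .
qed

lemma charging_step:
  fixes f :: "pair \<Rightarrow> real"
  assumes feas: "feasible L G N J \<beta> I \<alpha> F" and fin: "finite F" and v: "0 \<le> v"
    and S: "S = (if feasible L G N J \<beta> I \<alpha> (insert x F) then insert x F else F)"
    and self: "conflict L G I \<alpha> x x"
    and binary: "\<forall>q\<in>I. \<forall>y\<in>insert x F. \<alpha> q y \<in> {0, 1}"
    and narrow: "\<forall>q\<in>{1..J}. \<beta> q x \<le> 1/2"
    and nonneg: "\<forall>y\<in>insert x F. 0 \<le> f y"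
    and conflicting: "\<forall>y\<in>insert x F. conflict L G I \<alpha> y x \<longrightarrow> f y = v"
    and nonconflicting: "\<forall>y\<in>F. \<not> conflict L G I \<alpha> y x \<longrightarrow> (\<forall>q\<in>{1..J}. 2 * v * \<beta> q y \<le> f y)"
  shows "v \<le> (\<Sum>y\<in>S. f y)"
proof -
  have S_range: "S \<subseteq> insert x F" and fin_S: "finite S" using S fin by auto
  text \<open>A single element charged v suffices, the other summands being nonnegative.\<close>
  have single: "v \<le> (\<Sum>y\<in>S. f y)" if "y \<in> S" "conflict L G I \<alpha> y x" for y
  proof -
    have "f y \<le> (\<Sum>y\<in>S. f y)" using that fin_S S_range nonneg by (intro member_le_sum) auto
    with that S_range conflicting show ?thesis by auto
  qed
  consider (pushed) "feasible L G N J \<beta> I \<alpha> (insert x F)"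
    | (blocked) y where "y \<in> F" "conflict L G I \<alpha> y x"
    | (heavy) "\<not> feasible L G N J \<beta> I \<alpha> (insert x F)" "\<forall>y\<in>F. \<not> conflict L G I \<alpha> y x"
    by blast
  then show ?thesis
  proof cases
    case pushed
    then show ?thesis using single[of x] self S by simp
  next
    case (blocked y)
    then show ?thesis using single[of y] S by (simp split: if_splits)
  next
    case heavy
    obtain q where q: "q \<in> {1..J}" and weight: "(\<Sum>y\<in>F. \<beta> q y) > 1/2"
      using infeasible_insert_heavy[OF feas fin heavy binary narrow] by blast
    have "\<forall>y\<in>F. 2 * v * \<beta> q y \<le> f y" using nonconflicting heavy(2) q by blast
    then show ?thesis using charge_ge_half_weight[OF v _ weight] heavy(1) S by simp
  qed
qed

theorem lemma1:
  fixes K L T N J j :: nat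
    and G :: "nat \<Rightarrow> nat set"
    and I :: "nat set"
    and p :: "pair \<Rightarrow> real"
    and \<beta> \<alpha> :: "nat \<Rightarrow> pair \<Rightarrow> real"
    and sel :: "nat \<Rightarrow> pair"
  assumes groups_disj: "\<forall>s\<in>{1..L}. \<forall>s'\<in>{1..L}. s \<noteq> s' \<longrightarrow> G s \<inter> G s' = {}"
    and groups_cover: "(\<Union>s\<in>{1..L}. G s) = {1..K}"
    and p_nonneg: "\<forall>x\<in>pairs K L G T N. p x \<ge> 0"
    and beta_range: "\<forall>q\<in>{1..J}. \<forall>x\<in>pairs K L G T N. 0 \<le> \<beta> q x \<and> \<beta> q x \<le> 1"
    and alpha_range: "\<forall>q\<in>I. \<forall>x\<in>pairs K L G T N. \<alpha> q x \<in> {0, 1}"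
    and sel_max: "\<forall>i\<in>{1..N}. sel i \<in> narrow K L G T N J \<beta> \<and> Tail (snd (sel i)) = i \<and>
                   (\<forall>x\<in>narrow K L G T N J \<beta>. Tail (snd x) = i \<longrightarrow>
                      p2 L G I \<alpha> J \<beta> p sel (i - 1) x \<le> p2 L G I \<alpha> J \<beta> p sel (i - 1) (sel i))"
    and j_range: "j \<in> {1..N}"
    and Sj_nonempty: "p2 L G I \<alpha> J \<beta> p sel (j - 1) (sel j) > 0"
  shows "(\<Sum>x\<in>Sstar L G I \<alpha> J \<beta> p sel N (j - 1). p1 L G I \<alpha> J \<beta> p sel j x)
           \<ge> p2 L G I \<alpha> J \<beta> p sel (j - 1) (sel j)"
proof -
  define v where "v = p2 L G I \<alpha> J \<beta> p sel (j - 1) (sel j)"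
  define F where "F = Sstar L G I \<alpha> J \<beta> p sel N j"
  have j: "1 \<le> j" "j \<le> N" and v: "v > 0" using j_range Sj_nonempty by (auto simp: v_def)
  have sel_pairs: "\<forall>i\<in>{1..N}. sel i \<in> pairs K L G T N" using sel_max by (auto simp: narrow_def)
  have x: "sel j \<in> pairs K L G T N" and narrow: "\<forall>q\<in>{1..J}. \<beta> q (sel j) \<le> 1/2"
    using sel_max j_range by (auto simp: narrow_def)
  have F_pos: "y \<in> pairs K L G T N \<and> p2 L G I \<alpha> J \<beta> p sel (j - 1) y > 0" if "y \<in> F" for y
    using Sstar_positive[OF sel_pairs _ j] beta_range that unfolding F_def by blast
  have S: "Sstar L G I \<alpha> J \<beta> p sel N (j - 1) =
      (if feasible L G N J \<beta> I \<alpha> (insert (sel j) F) then insert (sel j) F else F)"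
    using Sstar_step[OF j] Sj_nonempty by (simp add: F_def Let_def)
  have "v \<le> (\<Sum>y\<in>Sstar L G I \<alpha> J \<beta> p sel N (j - 1). p1 L G I \<alpha> J \<beta> p sel j y)"
  proof (rule charging_step[OF _ _ _ S conflict_self[OF groups_cover x] _ narrow])
    show "feasible L G N J \<beta> I \<alpha> F" and "finite F"
      unfolding F_def Sstar_def by (rule stk_feasible, rule stk_finite)
    show "\<forall>q\<in>I. \<forall>y\<in>insert (sel j) F. \<alpha> q y \<in> {0, 1}" using alpha_range F_pos x by blast
    show "\<forall>y\<in>insert (sel j) F. 0 \<le> p1 L G I \<alpha> J \<beta> p sel j y"
      using beta_range F_pos x by (blast intro: p1_nonneg)
    show "\<forall>y\<in>insert (sel j) F. conflict L G I \<alpha> y (sel j) \<longrightarrow> p1 L G I \<alpha> J \<beta> p sel j y = v"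
      using p1_conflicting[of L G I \<alpha> J \<beta> p sel j] F_pos Sj_nonempty v by (auto simp: v_def)
    show "\<forall>y\<in>F. \<not> conflict L G I \<alpha> y (sel j) \<longrightarrow>
            (\<forall>q\<in>{1..J}. 2 * v * \<beta> q y \<le> p1 L G I \<alpha> J \<beta> p sel j y)"
      using p1_nonconflicting_ge[of L G I \<alpha> J \<beta> p sel j] F_pos v by (auto simp: v_def)
  qed (use v in simp)
  then show ?thesis by (simp add: v_def)
qed

end
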